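(* Let $\ell\ge1$, $S=\{1,\dots,\ell\}$, and let $\mathbb C(\mathbf X)$ be the field of rational functions in the $X$-variables $X^i_n$ ($i\in S$, $n\in\mathbb Z$) of the infinite quiver $Q(A_\ell)$, with Poisson bracket $\{X_u,X_v\}=\varepsilon_{uv}X_uX_v$. Let $\mathbb C(a)$ be the field of rational functions in the variables $a_i(n)$ ($i\in S$, $n\in\mathbb Z$) with log-canonical Poisson bracket determined by $\{a_i(n),a_i(n')\}=(\delta_{n',n+1}-\delta_{n',n-1})a_i(n)a_i(n')$ for $i\in S$, $\{a_i(n),a_{i+1}(n')\}=(\delta_{n',n-1}-\delta_{n',n})a_i(n)a_{i+1}(n')$ for $1\le i\le\ell-1$, and all other pairs of generators Poisson commuting. Then the field isomorphism $\beta:\mathbb C(\mathbf X)\to\mathbb C(a)$, $X^i_n\mapsto a_i(n)^{-1}$, is a Poisson map.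
   Context: The quiver $Q(A_\ell)$ has vertices $v^i_n$ ($i\in S$, $n\in\mathbb Z$) and arrows $v^i_n\to v^i_{n+1}$ for all $i$, and $v^{i+1}_n\to v^i_n$, $v^i_{n+1}\to v^{i+1}_n$ for $1\le i\le\ell-1$; its exchange matrix is $\varepsilon_{uv}=\#\{\text{arrows }u\to v\}-\#\{\text{arrows }v\to u\}$, and $X^i_n$ is the $X$-variable at $v^i_n$. (In the paper $a_i(n)=y_i(n)y_i(n+1)/(y_{i-1}(n+1)y_{i+1}(n))$ with $y_0=y_{\ell+1}=1$, the image of the Frenkel–Reshetikhin variable $A_{i,aq^{2n+i}}$; the bracket above is the one induced from the Frenkel–Reshetikhin Poisson structure.) *)

theory Defs
  imports Complex_Main "HOL-Library.Poly_Mapping" "HOL-Library.Product_Lexorder"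
    "HOL-Computational_Algebra.Fraction_Field"
begin

type_synonym var = "nat \<times> int"
type_synonym mpoly = "(var \<Rightarrow>\<^sub>0 nat) \<Rightarrow>\<^sub>0 complex"
type_synonym ratfun = "mpoly fract"

definition Var :: "var \<Rightarrow> mpoly" where
  "Var u = Poly_Mapping.single (Poly_Mapping.single u 1) 1"

definition Xv :: "var \<Rightarrow> ratfun" where
  "Xv u = Fract (Var u) 1"

definition cst :: "complex \<Rightarrow> ratfun" where
  "cst c = Fract (Poly_Mapping.single 0 c) 1"

definition pd :: "var \<Rightarrow> mpoly \<Rightarrow> mpoly" where
  "pd u p = (\<Sum>m\<in>Poly_Mapping.keys p. Poly_Mapping.single (m - Poly_Mapping.single u 1)
                                 (Poly_Mapping.lookup p m * of_nat (Poly_Mapping.lookup m u)))"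

text \<open>Partial derivative of a rational function (quotient rule; independent of the
  representative).\<close>
definition D :: "var \<Rightarrow> ratfun \<Rightarrow> ratfun" where
  "D u f = (SOME d. \<exists>p q. q \<noteq> 0 \<and> f = Fract p q \<and> d = Fract (q * pd u p - p * pd u q) (q * q))"

definition Vars :: "ratfun \<Rightarrow> var set" where
  "Vars f = {u. D u f \<noteq> 0}"

definition PB :: "(var \<Rightarrow> var \<Rightarrow> complex) \<Rightarrow> ratfun \<Rightarrow> ratfun \<Rightarrow> ratfun" where
  "PB c f g = (\<Sum>u\<in>Vars f. \<Sum>v\<in>Vars g. cst (c u v) * Xv u * Xv v * D u f * D v g)"

text \<open>Number of arrows u -> v in the quiver Q(A_l); vertex (i,n) is v^i_n.\<close>
definition arrows :: "nat \<Rightarrow> var \<Rightarrow> var \<Rightarrow> nat" where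
  "arrows l u v = (case u of (i, n) \<Rightarrow> case v of (j, m) \<Rightarrow>
      (if 1 \<le> i \<and> i \<le> l \<and> j = i \<and> m = n + 1 then 1 else 0)
    + (if 1 \<le> j \<and> j \<le> l - 1 \<and> i = j + 1 \<and> m = n then 1 else 0)
    + (if 1 \<le> i \<and> i \<le> l - 1 \<and> j = i + 1 \<and> n = m + 1 then 1 else 0))"

definition epsQ :: "nat \<Rightarrow> var \<Rightarrow> var \<Rightarrow> complex" where
  "epsQ l u v = of_int (int (arrows l u v) - int (arrows l v u))"

definition dlt :: "int \<Rightarrow> int \<Rightarrow> complex" where
  "dlt a b = (if a = b then 1 else 0)"

text \<open>Coefficients of the log-canonical bracket on the a-variables, (i,n) = a_i(n):
  the given generator brackets, completed by antisymmetry.\<close>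
definition cA :: "nat \<Rightarrow> var \<Rightarrow> var \<Rightarrow> complex" where
  "cA l u v = (case u of (i, n) \<Rightarrow> case v of (j, n') \<Rightarrow>
      if 1 \<le> i \<and> i \<le> l \<and> j = i then dlt n' (n + 1) - dlt n' (n - 1)
      else if 1 \<le> i \<and> i \<le> l - 1 \<and> j = i + 1 then dlt n' (n - 1) - dlt n' n
      else if 1 \<le> j \<and> j \<le> l - 1 \<and> i = j + 1 then - (dlt n (n' - 1) - dlt n n')
      else 0)"

definition evb :: "mpoly \<Rightarrow> ratfun" where
  "evb p = (\<Sum>m\<in>Poly_Mapping.keys p. cst (Poly_Mapping.lookup p m) * (\<Prod>u\<in>Poly_Mapping.keys m. inverse (Xv u) ^ Poly_Mapping.lookup m u))"

definition beta :: "ratfun \<Rightarrow> ratfun" where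
  "beta f = (SOME r. \<exists>p q. q \<noteq> 0 \<and> f = Fract p q \<and> r = evb p / evb q)"

definition pvars :: "mpoly \<Rightarrow> var set" where
  "pvars p = (\<Union>m\<in>Poly_Mapping.keys p. Poly_Mapping.keys m)"

definition ratfunS :: "nat \<Rightarrow> ratfun set" where
  "ratfunS l = {Fract p q | p q. q \<noteq> 0 \<and> pvars p \<union> pvars q \<subseteq> {1..l} \<times> UNIV}"

end

theory Submission
  imports Defs
begin

text \<open>The coefficients cA of the bracket on the a-variables coincide with the exchange matrix
  epsQ of the quiver, so it suffices to show that the substitution X_u := 1/X_u is a Poisson
  map for an arbitrary log-canonical bracket. By the chain rule,
  d(beta f)/dX_v = - beta(df/dX_v) / X_v^2; in each term c_uv X_u X_v (df/dX_u) (dg/dX_v) of the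
  bracket the two signs cancel and X_u X_v / (X_u^2 X_v^2) = beta (X_u X_v).\<close>

abbreviation single where "single \<equiv> Poly_Mapping.single"
abbreviation lookup where "lookup \<equiv> Poly_Mapping.lookup"
abbreviation keys where "keys \<equiv> Poly_Mapping.keys"

lemma poly_mapping_sum_single_lookup:
  "(p :: 'a \<Rightarrow>\<^sub>0 'b::comm_monoid_add) = (\<Sum>m\<in>keys p. single m (lookup p m))"
  by (rule poly_mapping_eqI) (simp add: lookup_sum lookup_single when_def in_keys_iff)

lemma poly_mapping_induct_single:
  fixes m :: "'a \<Rightarrow>\<^sub>0 'b::comm_monoid_add"
  assumes "P 0" "\<And>a b. P a \<Longrightarrow> P b \<Longrightarrow> P (a + b)" "\<And>u k. P (single u k)"
  shows "P m"
proof -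
  have "P (\<Sum>u\<in>B. single u (lookup m u))" if "finite B" for B
    using that by (induction B rule: finite_induct) (auto intro: assms)
  then show ?thesis
    using poly_mapping_sum_single_lookup[of m] by (metis finite_keys)
qed

lemma times_mpoly_expand:
  "(p::mpoly) * q = (\<Sum>m\<in>keys p. \<Sum>n\<in>keys q. single (m + n) (lookup p m * lookup q n))"
  by (subst (1 2) poly_mapping_sum_single_lookup) (simp add: sum_product mult_single)

section \<open>Partial derivatives\<close>

lemma pd_eq_sum_over:
  assumes "finite A" "keys p \<subseteq> A"
  shows "pd u p = (\<Sum>m\<in>A. single (m - single u 1) (lookup p m * of_nat (lookup m u)))"
  unfolding pd_def
  by (rule sum.mono_neutral_left) (use assms in \<open>auto simp: in_keys_iff\<close>)

lemma pd_add: "pd u (p + q) = pd u p + pd u q"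
proof -
  let ?A = "keys p \<union> keys q"
  have "pd u (p + q) = (\<Sum>m\<in>?A. single (m - single u 1) (lookup (p + q) m * of_nat (lookup m u)))"
    by (rule pd_eq_sum_over) (auto simp: keys_add)
  also have "\<dots> = (\<Sum>m\<in>?A. single (m - single u 1) (lookup p m * of_nat (lookup m u)))
      + (\<Sum>m\<in>?A. single (m - single u 1) (lookup q m * of_nat (lookup m u)))"
    by (simp add: lookup_add distrib_right single_add sum.distrib)
  also have "\<dots> = pd u p + pd u q"
    by (simp add: pd_eq_sum_over[where A = ?A and p = p] pd_eq_sum_over[where A = ?A and p = q])
  finally show ?thesis .
qed

lemma pd_zero [simp]: "pd u 0 = 0"
  by (simp add: pd_def)

lemma pd_sum: "pd u (\<Sum>i\<in>A. f i) = (\<Sum>i\<in>A. pd u (f i))"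
  by (induction A rule: infinite_finite_induct) (auto simp: pd_add)

lemma pd_single: "pd u (single m c) = single (m - single u 1) (c * of_nat (lookup m u))"
  by (subst pd_eq_sum_over[of "{m}"]) auto

text \<open>Subtracting the unit exponent vector truncates at zero, hence the case split on whether
  u occurs in m and in n.\<close>
lemma single_leibniz:
  "single (m + n - single u 1) (c * of_nat (lookup m u + lookup n u)) =
   single (m + (n - single u 1)) (c * of_nat (lookup n u))
   + single ((m - single u 1) + n) (c * of_nat (lookup m u))"
proof -
  have n_pos: "m + (n - single u 1) = m + n - single u 1" if "lookup n u > 0"
    by (rule poly_mapping_eqI) (use that in \<open>auto simp: lookup_add lookup_minus lookup_single when_def\<close>)
  have m_pos: "(m - single u 1) + n = m + n - single u 1" if "lookup m u > 0"
    by (rule poly_mapping_eqI) (use that in \<open>auto simp: lookup_add lookup_minus lookup_single when_def\<close>)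
  show ?thesis
    by (cases "lookup n u > 0"; cases "lookup m u > 0")
      (use n_pos m_pos in \<open>simp_all add: single_add[symmetric] algebra_simps\<close>)
qed

lemma pd_mult: "pd u (p * q) = p * pd u q + pd u p * q"
proof -
  have "pd u (p * q) = (\<Sum>m\<in>keys p. \<Sum>n\<in>keys q.
      single (m + n - single u 1) (lookup p m * lookup q n * of_nat (lookup m u + lookup n u)))"
    by (simp add: times_mpoly_expand pd_sum pd_single lookup_add)
  also have "\<dots> = (\<Sum>m\<in>keys p. \<Sum>n\<in>keys q.
      single (m + (n - single u 1)) (lookup p m * (lookup q n * of_nat (lookup n u))))
    + (\<Sum>m\<in>keys p. \<Sum>n\<in>keys q.
      single ((m - single u 1) + n) (lookup p m * of_nat (lookup m u) * lookup q n))"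
    by (simp only: single_leibniz) (simp add: sum.distrib ac_simps)
  also have "\<dots> = p * pd u q + pd u p * q"
    by (subst (1 4) poly_mapping_sum_single_lookup) (simp add: pd_def sum_product mult_single)
  finally show ?thesis .
qed

lemma pd_const: "pd u (single 0 c) = 0"
  by (simp add: pd_single)

lemma pd_one: "pd u 1 = 0"
  using pd_const[of u 1] by simp

lemma pd_Var: "pd u (Var v) = (if v = u then 1 else 0)"
  by (simp add: Var_def pd_single lookup_single when_def)

lemma D_Fract_well_defined:
  assumes "q \<noteq> 0" "q' \<noteq> 0" "Fract p q = Fract p' q'"
  shows "Fract (q' * pd u p' - p' * pd u q') (q' * q') = Fract (q * pd u p - p * pd u q) (q * q)"
proof -
  have cross: "p * q' = p' * q"
    using assms by (simp add: eq_fract)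
  have pd_cross: "pd u p * q' + p * pd u q' = pd u p' * q + p' * pd u q"
    using arg_cong[OF cross, of "pd u"] by (simp add: pd_mult algebra_simps)
  have "(q' * pd u p' - p' * pd u q') * (q * q) - (q * pd u p - p * pd u q) * (q' * q')
      = q * q' * (pd u p' * q + p' * pd u q - pd u p * q' - p * pd u q')
        + (p * q' - p' * q) * (q * pd u q' + q' * pd u q)"
    by (simp add: algebra_simps)
  also have "\<dots> = 0"
    using cross pd_cross by (simp add: algebra_simps)
  finally show ?thesis
    using assms by (simp add: eq_fract)
qed

lemma D_Fract: "q \<noteq> 0 \<Longrightarrow> D u (Fract p q) = Fract (q * pd u p - p * pd u q) (q * q)"
  unfolding D_def
  by (rule someI2[where a = "Fract (q * pd u p - p * pd u q) (q * q)"])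
    (auto dest: D_Fract_well_defined)

lemma D_zero [simp]: "D u 0 = 0"
  using D_Fract[of 1 u 0] by (simp add: Zero_fract_def[symmetric] fract_collapse)

lemma D_add: "D u (f + g) = D u f + D u g"
proof (cases f; cases g)
  fix p q r s
  assume "f = Fract p q" "q \<noteq> 0" "g = Fract r s" "s \<noteq> 0"
  then show ?thesis
    by (simp add: D_Fract eq_fract pd_add pd_mult algebra_simps)
qed

lemma D_mult: "D u (f * g) = D u f * g + f * D u g"
proof (cases f; cases g)
  fix p q r s
  assume "f = Fract p q" "q \<noteq> 0" "g = Fract r s" "s \<noteq> 0"
  then show ?thesis
    by (simp add: D_Fract eq_fract pd_add pd_mult algebra_simps)
qed

lemma D_inverse: "D u (inverse f) = - D u f * inverse f ^ 2"
proof (cases f)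
  case (Fract p q)
  then show ?thesis
    by (cases "p = 0") (simp_all add: fract_collapse D_Fract eq_fract power2_eq_square)
qed

lemma D_divide: "D u (f / g) = D u f * inverse g - f * D u g * inverse g ^ 2"
  by (simp add: divide_inverse D_mult D_inverse)

lemma D_Xv: "D u (Xv v) = (if v = u then 1 else 0)"
  by (simp add: Xv_def D_Fract pd_Var pd_one fract_collapse)

lemma D_cst: "D u (cst c) = 0"
  by (simp add: cst_def D_Fract pd_const pd_one fract_collapse)

lemma D_one [simp]: "D u 1 = 0"
  using D_cst[of u 1] by (simp add: cst_def fract_collapse)

lemma D_sum: "D u (\<Sum>i\<in>A. f i) = (\<Sum>i\<in>A. D u (f i))"
  by (induction A rule: infinite_finite_induct) (auto simp: D_add)

lemma D_power: "D u (f ^ k) = of_nat k * f ^ (k - 1) * D u f"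
proof (induction k)
  case (Suc k)
  then show ?case
    by (cases k) (auto simp: D_mult algebra_simps)
qed simp

lemma D_prod_eq_0: "(\<And>i. i \<in> A \<Longrightarrow> D u (f i) = 0) \<Longrightarrow> D u (\<Prod>i\<in>A. f i) = 0"
  by (induction A rule: infinite_finite_induct) (simp_all add: D_mult)

section \<open>Evaluation at the inverted variables\<close>

lemma cst_add: "cst (a + b) = cst a + cst b"
  by (simp add: cst_def single_add)

lemma cst_mult: "cst (a * b) = cst a * cst b"
  by (simp add: cst_def mult_single)

lemma cst_zero [simp]: "cst 0 = 0"
  by (simp add: cst_def fract_collapse)

lemma cst_one [simp]: "cst 1 = 1"
  by (simp add: cst_def fract_collapse)

lemma cst_of_nat: "cst (of_nat k) = of_nat k"
  by (induction k) (simp_all add: cst_add)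

lemma Fract_one_add: "Fract (a + b) 1 = Fract a 1 + Fract (b::mpoly) 1"
  using add_fract[of 1 1 a b] by simp

lemma Fract_one_mult: "Fract (a * b) 1 = Fract a 1 * Fract (b::mpoly) 1"
  by simp

lemma Fract_one_sum: "Fract (\<Sum>i\<in>A. f i) 1 = (\<Sum>i\<in>A. Fract (f i :: mpoly) 1)"
  by (induction A rule: infinite_finite_induct) (simp_all add: fract_collapse Fract_one_add)

lemma Fract_one_eq_0_iff: "Fract (a::mpoly) 1 = 0 \<longleftrightarrow> a = 0"
  by (simp add: Zero_fract_def eq_fract)

lemma Xv_nonzero: "Xv u \<noteq> 0"
  unfolding Xv_def Fract_one_eq_0_iff Var_def
  by (metis lookup_single_eq lookup_zero zero_neq_one)

definition inv_mon :: "(var \<Rightarrow>\<^sub>0 nat) \<Rightarrow> ratfun" where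
  "inv_mon m = (\<Prod>u\<in>keys m. inverse (Xv u) ^ lookup m u)"

lemma inv_mon_eq_prod_over:
  assumes "finite A" "keys m \<subseteq> A"
  shows "inv_mon m = (\<Prod>u\<in>A. inverse (Xv u) ^ lookup m u)"
  unfolding inv_mon_def
  by (rule prod.mono_neutral_left) (use assms in \<open>auto simp: in_keys_iff\<close>)

lemma inv_mon_add: "inv_mon (m + n) = inv_mon m * inv_mon n"
proof -
  let ?A = "keys m \<union> keys n"
  have "inv_mon (m + n) = (\<Prod>u\<in>?A. inverse (Xv u) ^ lookup (m + n) u)"
    by (rule inv_mon_eq_prod_over) (auto simp: keys_add)
  also have "\<dots> = (\<Prod>u\<in>?A. inverse (Xv u) ^ lookup m u) * (\<Prod>u\<in>?A. inverse (Xv u) ^ lookup n u)"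
    by (simp add: lookup_add power_add prod.distrib)
  also have "\<dots> = inv_mon m * inv_mon n"
    by (simp add: inv_mon_eq_prod_over[where A = ?A and m = m] inv_mon_eq_prod_over[where A = ?A and m = n])
  finally show ?thesis .
qed

lemma inv_mon_zero [simp]: "inv_mon 0 = 1"
  by (simp add: inv_mon_def)

lemma inv_mon_single: "inv_mon (single u k) = inverse (Xv u) ^ k"
  by (cases "k = 0") (simp_all add: inv_mon_def)

lemma evb_eq_sum_over:
  assumes "finite A" "keys p \<subseteq> A"
  shows "evb p = (\<Sum>m\<in>A. cst (lookup p m) * inv_mon m)"
  unfolding evb_def inv_mon_def[symmetric]
  by (rule sum.mono_neutral_left) (use assms in \<open>auto simp: in_keys_iff\<close>)

lemma evb_zero [simp]: "evb 0 = 0"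
  by (simp add: evb_def)

lemma evb_add: "evb (p + q) = evb p + evb q"
proof -
  let ?A = "keys p \<union> keys q"
  have "evb (p + q) = (\<Sum>m\<in>?A. cst (lookup (p + q) m) * inv_mon m)"
    by (rule evb_eq_sum_over) (auto simp: keys_add)
  also have "\<dots> = (\<Sum>m\<in>?A. cst (lookup p m) * inv_mon m) + (\<Sum>m\<in>?A. cst (lookup q m) * inv_mon m)"
    by (simp add: lookup_add cst_add distrib_right sum.distrib)
  also have "\<dots> = evb p + evb q"
    by (simp add: evb_eq_sum_over[where A = ?A and p = p] evb_eq_sum_over[where A = ?A and p = q])
  finally show ?thesis .
qed

lemma evb_sum: "evb (\<Sum>i\<in>A. f i) = (\<Sum>i\<in>A. evb (f i))"
  by (induction A rule: infinite_finite_induct) (auto simp: evb_add)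

lemma evb_single: "evb (single m c) = cst c * inv_mon m"
  by (subst evb_eq_sum_over[of "{m}"]) auto

lemma evb_diff: "evb (p - q) = evb p - evb q"
  using evb_add[of "p - q" q] by (simp add: algebra_simps)

lemma evb_mult: "evb (p * q) = evb p * evb q"
proof -
  have "evb (p * q) = (\<Sum>m\<in>keys p. \<Sum>n\<in>keys q. cst (lookup p m) * inv_mon m * (cst (lookup q n) * inv_mon n))"
    by (simp add: times_mpoly_expand evb_sum evb_single cst_mult inv_mon_add ac_simps)
  also have "\<dots> = evb p * evb q"
    unfolding evb_def inv_mon_def[symmetric] by (simp add: sum_product)
  finally show ?thesis .
qed

lemma evb_one [simp]: "evb 1 = 1"
  using evb_single[of 0 1] by simp

lemma evb_Var: "evb (Var u) = inverse (Xv u)"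
  by (simp add: Var_def evb_single inv_mon_single cst_def fract_collapse)

lemma Fract_single_single_one: "Fract (single (single u k) 1) 1 = Xv u ^ k"
proof (induction k)
  case (Suc k)
  have "single (single u (Suc k)) (1::complex) = Var u * single (single u k) 1"
    by (simp add: Var_def mult_single single_add[symmetric])
  then show ?case
    using Suc by (simp only: Xv_def Fract_one_mult power_Suc)
qed (simp add: fract_collapse)

lemma inv_mon_mult_Fract_single: "inv_mon m * Fract (single m 1) 1 = 1"
proof (induction m rule: poly_mapping_induct_single)
  case (2 a b)
  have "Fract (single (a + b) (1::complex)) 1 = Fract (single a 1) 1 * Fract (single b 1) 1"
    by (simp add: mult_single)
  then have "inv_mon (a + b) * Fract (single (a + b) 1) 1
      = (inv_mon a * Fract (single a 1) 1) * (inv_mon b * Fract (single b 1) 1)"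
    by (simp only: inv_mon_add mult_ac)
  then show ?case
    using 2 by simp
next
  case (3 u k)
  then show ?case
    using Xv_nonzero[of u] by (simp add: inv_mon_single Fract_single_single_one power_inverse)
qed (simp add: inv_mon_def fract_collapse)

definition reflect :: "(var \<Rightarrow>\<^sub>0 nat) \<Rightarrow> mpoly \<Rightarrow> mpoly" where
  "reflect M q = (\<Sum>m\<in>keys q. single (M - m) (lookup q m))"

lemma evb_mult_Fract_single:
  assumes bound: "\<And>m u. m \<in> keys q \<Longrightarrow> lookup m u \<le> lookup M u"
  shows "evb q * Fract (single M 1) 1 = Fract (reflect M q) 1"
proof -
  have "inv_mon m * Fract (single M 1) 1 = Fract (single (M - m) 1) 1" if "m \<in> keys q" for m
  proof -
    have "M = m + (M - m)"
      by (rule poly_mapping_eqI) (use bound[OF that] in \<open>simp add: lookup_add lookup_minus\<close>)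
    then have "single M (1::complex) = single m 1 * single (M - m) 1"
      by (metis mult_single mult_1)
    then have "inv_mon m * Fract (single M 1) 1
        = (inv_mon m * Fract (single m 1) 1) * Fract (single (M - m) 1) 1"
      by (simp only: Fract_one_mult mult_ac)
    then show ?thesis
      by (simp add: inv_mon_mult_Fract_single)
  qed
  then have "evb q * Fract (single M 1) 1 = (\<Sum>m\<in>keys q. cst (lookup q m) * Fract (single (M - m) 1) 1)"
    unfolding evb_def inv_mon_def[symmetric] sum_distrib_right
    by (intro sum.cong) (simp_all add: mult.assoc)
  also have "\<dots> = Fract (reflect M q) 1"
    unfolding reflect_def Fract_one_sum by (simp add: cst_def mult_single)
  finally show ?thesis .
qed

lemma reflect_nonzero:
  assumes bound: "\<And>m u. m \<in> keys q \<Longrightarrow> lookup m u \<le> lookup M u" and "q \<noteq> 0"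
  shows "reflect M q \<noteq> 0"
proof -
  obtain m0 where m0: "m0 \<in> keys q"
    using \<open>q \<noteq> 0\<close> by (metis all_not_in_conv keys_eq_empty)
  have reflect_inj: "m = m0" if "m \<in> keys q" "M - m = M - m0" for m
  proof (rule poly_mapping_eqI)
    fix u
    have "lookup (M - m) u = lookup (M - m0) u"
      using that by simp
    then show "lookup m u = lookup m0 u"
      using bound[OF that(1), of u] bound[OF m0, of u] by (simp add: lookup_minus)
  qed
  have "lookup (reflect M q) (M - m0) = (\<Sum>m\<in>keys q. if m = m0 then lookup q m else 0)"
    unfolding reflect_def lookup_sum
    by (rule sum.cong) (auto simp: lookup_single when_def dest: reflect_inj)
  also have "\<dots> = lookup q m0"
    using m0 by simp
  finally show ?thesis
    using m0 by (auto simp: in_keys_iff)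
qed

text \<open>Multiplying by X^M, with M above every exponent of q, clears the denominators of evb q
  and turns it into the nonzero polynomial reflect M q.\<close>
lemma evb_nonzero:
  assumes "q \<noteq> 0"
  shows "evb q \<noteq> 0"
proof -
  define M where "M = (\<Sum>m\<in>keys q. m)"
  have bound: "lookup m u \<le> lookup M u" if "m \<in> keys q" for m u
    unfolding M_def lookup_sum using that by (intro member_le_sum) auto
  have "evb q * Fract (single M 1) 1 \<noteq> 0"
    using reflect_nonzero[OF bound assms]
    by (simp add: evb_mult_Fract_single[OF bound] Fract_one_eq_0_iff)
  then show ?thesis
    by auto
qed

lemma beta_Fract_well_defined:
  assumes "q \<noteq> 0" "q' \<noteq> 0" "Fract p q = Fract p' q'"
  shows "evb p' / evb q' = evb p / evb q"
proof -
  have "p * q' = p' * q"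
    using assms by (simp add: eq_fract)
  then have "evb p * evb q' = evb p' * evb q"
    by (metis evb_mult)
  then show ?thesis
    using evb_nonzero[OF assms(1)] evb_nonzero[OF assms(2)] by (simp add: frac_eq_eq)
qed

lemma beta_Fract: "q \<noteq> 0 \<Longrightarrow> beta (Fract p q) = evb p / evb q"
  unfolding beta_def
  by (rule someI2[where a = "evb p / evb q"]) (auto dest: beta_Fract_well_defined)

lemma beta_zero [simp]: "beta 0 = 0"
  by (simp add: Zero_fract_def beta_Fract)

lemma beta_add: "beta (f + g) = beta f + beta g"
proof (cases f; cases g)
  fix p q r s
  assume "f = Fract p q" "q \<noteq> 0" "g = Fract r s" "s \<noteq> 0"
  then show ?thesis
    using evb_nonzero[of q] evb_nonzero[of s]
    by (simp add: beta_Fract evb_add evb_mult add_divide_eq_iff divide_add_eq_iff)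
qed

lemma beta_mult: "beta (f * g) = beta f * beta g"
proof (cases f; cases g)
  fix p q r s
  assume "f = Fract p q" "q \<noteq> 0" "g = Fract r s" "s \<noteq> 0"
  then show ?thesis
    by (simp add: beta_Fract evb_mult)
qed

lemma beta_sum: "beta (\<Sum>i\<in>A. f i) = (\<Sum>i\<in>A. beta (f i))"
  by (induction A rule: infinite_finite_induct) (auto simp: beta_add)

lemma beta_cst: "beta (cst c) = cst c"
  by (simp add: cst_def beta_Fract evb_single)

lemma beta_Xv: "beta (Xv u) = inverse (Xv u)"
  by (simp add: Xv_def beta_Fract evb_Var)

lemma beta_eq_0_imp: "beta f = 0 \<Longrightarrow> f = 0"
proof (cases f)
  case (Fract p q)
  assume "beta f = 0"
  then have "p = 0"
    using Fract evb_nonzero[of q] evb_nonzero[of p] by (auto simp: beta_Fract)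
  then show ?thesis
    using Fract by (simp add: fract_collapse)
qed

section \<open>The Poisson property\<close>

lemma D_inverse_Xv_power:
  "D v (inverse (Xv u) ^ k) = (if u = v then - of_nat k * inverse (Xv v) ^ (k - 1) * inverse (Xv v) ^ 2 else 0)"
  by (simp add: D_power D_inverse D_Xv)

lemma D_inv_mon: "D v (inv_mon m) = - of_nat (lookup m v) * inv_mon (m - single v 1) * inverse (Xv v) ^ 2"
proof -
  let ?A = "insert v (keys m)"
  define P where "P = (\<Prod>u\<in>keys m - {v}. inverse (Xv u) ^ lookup m u)"
  have m: "inv_mon m = inverse (Xv v) ^ lookup m v * P"
    unfolding P_def
    by (subst inv_mon_eq_prod_over[of ?A]) (simp_all add: prod.insert_remove subset_insertI)
  have "inv_mon (m - single v 1)
      = inverse (Xv v) ^ (lookup m v - 1) * (\<Prod>u\<in>keys m - {v}. inverse (Xv u) ^ lookup (m - single v 1) u)"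
    by (subst inv_mon_eq_prod_over[of ?A])
      (auto simp: prod.insert_remove lookup_minus in_keys_iff)
  also have "(\<Prod>u\<in>keys m - {v}. inverse (Xv u) ^ lookup (m - single v 1) u) = P"
    unfolding P_def by (rule prod.cong) (auto simp: lookup_minus lookup_single)
  finally have m_minus: "inv_mon (m - single v 1) = inverse (Xv v) ^ (lookup m v - 1) * P" .
  have "D v P = 0"
    unfolding P_def by (rule D_prod_eq_0) (auto simp: D_inverse_Xv_power)
  then show ?thesis
    unfolding m m_minus by (simp add: D_mult D_inverse_Xv_power ac_simps)
qed

lemma D_evb: "D v (evb p) = - evb (pd v p) * inverse (Xv v) ^ 2"
proof -
  have "D v (evb p) = (\<Sum>m\<in>keys p. cst (lookup p m) * D v (inv_mon m))"
    unfolding evb_def inv_mon_def[symmetric]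
    by (simp add: D_sum D_mult D_cst)
  also have "\<dots> = (\<Sum>m\<in>keys p.
      - (cst (lookup p m) * of_nat (lookup m v) * inv_mon (m - single v 1) * inverse (Xv v) ^ 2))"
    by (rule sum.cong) (simp_all add: D_inv_mon)
  also have "\<dots> = - evb (pd v p) * inverse (Xv v) ^ 2"
    unfolding pd_def evb_sum evb_single
    by (simp add: cst_mult cst_of_nat sum_distrib_right sum_negf)
  finally show ?thesis .
qed

lemma D_beta: "D v (beta f) = - beta (D v f) * inverse (Xv v) ^ 2"
proof (cases f)
  case (Fract p q)
  then show ?thesis
    using evb_nonzero[of q] Xv_nonzero[of v]
    by (simp add: beta_Fract D_Fract D_divide D_evb evb_mult evb_diff field_simps power2_eq_square)
qed

lemma Vars_beta: "Vars (beta f) = Vars f"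
proof -
  have "D v (beta f) \<noteq> 0 \<longleftrightarrow> D v f \<noteq> 0" for v
    using Xv_nonzero[of v] beta_eq_0_imp[of "D v f"] by (auto simp: D_beta)
  then show ?thesis
    by (simp add: Vars_def)
qed

lemma beta_PB: "beta (PB c f g) = PB c (beta f) (beta g)"
proof -
  have inverse_Xv: "Xv w * inverse (Xv w) ^ 2 = inverse (Xv w)" for w
    using Xv_nonzero[of w] by (simp add: power2_eq_square)
  have "beta (PB c f g) = (\<Sum>u\<in>Vars f. \<Sum>v\<in>Vars g.
      cst (c u v) * inverse (Xv u) * inverse (Xv v) * beta (D u f) * beta (D v g))"
    by (simp add: PB_def beta_sum beta_mult beta_cst beta_Xv)
  also have "\<dots> = (\<Sum>u\<in>Vars f. \<Sum>v\<in>Vars g.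
      cst (c u v) * (Xv u * inverse (Xv u) ^ 2) * (Xv v * inverse (Xv v) ^ 2) * beta (D u f) * beta (D v g))"
    by (simp only: inverse_Xv)
  also have "\<dots> = PB c (beta f) (beta g)"
    unfolding PB_def Vars_beta D_beta by (simp add: ac_simps)
  finally show ?thesis .
qed

lemma epsQ_eq_cA: "epsQ l = cA l"
  by (intro ext) (auto simp: epsQ_def cA_def arrows_def dlt_def split: prod.splits)

theorem proposition4p4:
  fixes l :: nat
  assumes "l \<ge> 1"
  shows "\<forall>f\<in>ratfunS l. \<forall>g\<in>ratfunS l.
           beta (PB (epsQ l) f g) = PB (cA l) (beta f) (beta g)"
  by (simp add: epsQ_eq_cA beta_PB)

end
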